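(* Let $A=KQ/I$ be a finite-dimensional gentle algebra, let $D$ be a string or a band for $A$, let $m=\ell(D)$ be its length and let $1\le k\le m$. Then $D\le_{\mathrm{deg}}D_{\hat k}$, i.e. $\mathcal{O}_{D_{\hat k}}\subseteq\overline{\mathcal{O}_{D}}$ in $\mathrm{mod}(A,\mathbf{d})$, where $\mathbf{d}$ is the dimension vector of $D$ (which equals that of $D_{\hat k}$).
   Context: Letters are arrows $\alpha\in Q_1$ (direct) and formal inverses $\alpha^{-1}$ (inverse). A string is a reduced walk $C=c_1\cdots c_m$ in $Q$ avoiding the relations of $I$ (and their inverses), with vertex positions $v_1,\dots,v_{m+1}$ ($c_t$ goes from $v_t$ to $v_{t+1}$); trivial strings $e_v$ have length $0$; a string is identified with its inverse. For $1\le i\le j\le m+1$, $C[i,j]$ denotes the substring $c_i\cdots c_{j-1}$ from $v_i$ to $v_j$ (trivial string $e_{v_i}$ if $i=j$), $C_{\le i}=C[1,i]$, $C_{\ge j}=C[j,m+1]$. A band is a closed walk $B=b_1\cdots b_m$ ($m\ge1$) all of whose powers are strings, up to rotation and inversion; $\ell(B)=m$. Deleting the $k$-th arrow: for a string $C$, $C_{\hat k}$ is the multi-set $\{C_{\le k},C_{\ge k+1}\}$; for a band $B=b_1\cdots b_m$ (with a chosen representative), $B_{\hat k}$ is the one-element multi-set consisting of the string $b_{k+1}\cdots b_m b_1\cdots b_{k-1}$. $M(C)$ is the string module (a copy of $K$ at each vertex position, arrows acting by identities along letters) and $M(B,\lambda,q)$ ($\lambda\in K^*$) the band module (a copy of $K^q$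 at each vertex position of the closed walk, identities along letters except one fixed letter acting by the Jordan block $J(\lambda,q)$). $\mathrm{mod}(A,\mathbf{d})$ is the affine variety of representations of $(Q,I)$ with dimension vector $\mathbf{d}$, Zariski topology, base change action of $\mathrm{GL}_{\mathbf{d}}$. For a multi-set of strings $C_i$ and pairwise distinct bands $B_j$ with multiplicities $q_j$, its family $\mathcal{O}$ is the union of the orbits of all modules $\bigoplus_i M(C_i)\oplus\bigoplus_j\bigoplus_k M(B_j,\lambda_{jk},q_{jk})$ with $(q_{jk})_k$ a partition of $q_j$, $\lambda_{jk}\in K^*$; $\mathcal{O}_D$ for a single string or band $D$ is the family of the one-element multi-set $\{D\}$. Standing assumption: $K$ is an algebraically closed field. *)

theory Defs
  imports "Jordan_Normal_Form.Jordan_Normal_Form" "HOL-Computational_Algebra.Polynomial"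
begin

text \<open>The ideal I of a gentle algebra is generated by paths of
length two; R is the set of such generating relations, a pair (al, be) in R meaning
that the path "first al, then be" (with t al = s be) lies in I.\<close>

definition is_path :: "('a \<Rightarrow> 'v) \<Rightarrow> ('a \<Rightarrow> 'v) \<Rightarrow> 'a list \<Rightarrow> bool" where
  "is_path s t p \<longleftrightarrow> p \<noteq> [] \<and> (\<forall>i. Suc i < length p \<longrightarrow> t (p!i) = s (p!Suc i))"

definition avoids_R :: "('a \<times> 'a) set \<Rightarrow> 'a list \<Rightarrow> bool" where
  "avoids_R R p \<longleftrightarrow> (\<forall>i. Suc i < length p \<longrightarrow> (p!i, p!Suc i) \<notin> R)"

definition gentle :: "('a::finite \<Rightarrow> 'v::finite) \<Rightarrow> ('a \<Rightarrow> 'v) \<Rightarrow> ('a \<times> 'a) set \<Rightarrow> bool" where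
  "gentle s t R \<longleftrightarrow>
     (\<forall>(al, be) \<in> R. t al = s be) \<and>
     (\<forall>v. card {al. s al = v} \<le> 2 \<and> card {al. t al = v} \<le> 2) \<and>
     (\<forall>be. card {al. t al = s be \<and> (al, be) \<in> R} \<le> 1 \<and>
           card {al. t al = s be \<and> (al, be) \<notin> R} \<le> 1) \<and>
     (\<forall>al. card {be. s be = t al \<and> (al, be) \<in> R} \<le> 1 \<and>
           card {be. s be = t al \<and> (al, be) \<notin> R} \<le> 1)"

text \<open>KQ/I is finite-dimensional iff there are only finitely many paths not in I.\<close>
definition fin_dim_alg :: "('a \<Rightarrow> 'v) \<Rightarrow> ('a \<Rightarrow> 'v) \<Rightarrow> ('a \<times> 'a) set \<Rightarrow> bool" where
  "fin_dim_alg s t R \<longleftrightarrow> finite {p. is_path s t p \<and> avoids_R R p}"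

definition alg_closed :: "'k::field itself \<Rightarrow> bool" where
  "alg_closed _ \<longleftrightarrow> (\<forall>p :: 'k poly. degree p > 0 \<longrightarrow> (\<exists>x. poly p x = 0))"

datatype 'a letter = Dir 'a | Inv 'a

fun lsrc :: "('a \<Rightarrow> 'v) \<Rightarrow> ('a \<Rightarrow> 'v) \<Rightarrow> 'a letter \<Rightarrow> 'v" where
  "lsrc s t (Dir a) = s a"
| "lsrc s t (Inv a) = t a"

fun ltgt :: "('a \<Rightarrow> 'v) \<Rightarrow> ('a \<Rightarrow> 'v) \<Rightarrow> 'a letter \<Rightarrow> 'v" where
  "ltgt s t (Dir a) = t a"
| "ltgt s t (Inv a) = s a"

fun linv :: "'a letter \<Rightarrow> 'a letter" where
  "linv (Dir a) = Inv a"
| "linv (Inv a) = Dir a"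

text \<open>A string is a pair (v0, cs): the walk cs starting at vertex v0 (v0 matters
only for the trivial string e_v0, i.e. cs = []).\<close>
definition is_string :: "('a \<Rightarrow> 'v) \<Rightarrow> ('a \<Rightarrow> 'v) \<Rightarrow> ('a \<times> 'a) set \<Rightarrow> 'v \<times> 'a letter list \<Rightarrow> bool" where
  "is_string s t R C \<longleftrightarrow> (case C of (v0, cs) \<Rightarrow>
     (cs \<noteq> [] \<longrightarrow> lsrc s t (hd cs) = v0) \<and>
     (\<forall>i. Suc i < length cs \<longrightarrow> ltgt s t (cs!i) = lsrc s t (cs!Suc i)) \<and>
     (\<forall>i. Suc i < length cs \<longrightarrow> cs!Suc i \<noteq> linv (cs!i)) \<and>
     (\<forall>i al be. Suc i < length cs \<longrightarrow>
        ((cs!i = Dir al \<and> cs!Suc i = Dir be) \<or> (cs!i = Inv be \<and> cs!Suc i = Inv al))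
        \<longrightarrow> (al, be) \<notin> R))"

definition is_band :: "('a \<Rightarrow> 'v) \<Rightarrow> ('a \<Rightarrow> 'v) \<Rightarrow> ('a \<times> 'a) set \<Rightarrow> 'a letter list \<Rightarrow> bool" where
  "is_band s t R cs \<longleftrightarrow> cs \<noteq> [] \<and> ltgt s t (last cs) = lsrc s t (hd cs) \<and>
     (\<forall>n\<ge>1. is_string s t R (lsrc s t (hd cs), concat (replicate n cs)))"

text \<open>Vertex at (0-based) position p of the string (v0, cs).\<close>
definition pos_vert :: "('a \<Rightarrow> 'v) \<Rightarrow> ('a \<Rightarrow> 'v) \<Rightarrow> 'v \<Rightarrow> 'a letter list \<Rightarrow> nat \<Rightarrow> 'v" where
  "pos_vert s t v0 cs p = (if p = 0 then v0 else ltgt s t (cs!(p - 1)))"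

text \<open>A piece is a string module M(C) (SP v0 cs) or a band module M(B, lam, q) (BP B lam q).
Basis of a piece: pairs (position, index in K^q).\<close>
datatype ('v, 'a, 'k) piece = SP 'v "'a letter list" | BP "'a letter list" 'k nat

fun pbasis :: "('v, 'a, 'k) piece \<Rightarrow> (nat \<times> nat) set" where
  "pbasis (SP v cs) = {(p, 0) | p. p \<le> length cs}"
| "pbasis (BP cs lam q) = {(p, j). p < length cs \<and> j < q}"

fun pvert :: "('a \<Rightarrow> 'v) \<Rightarrow> ('a \<Rightarrow> 'v) \<Rightarrow> ('v, 'a, 'k) piece \<Rightarrow> nat \<times> nat \<Rightarrow> 'v" where
  "pvert s t (SP v cs) (p, j) = pos_vert s t v cs p"
| "pvert s t (BP cs lam q) (p, j) = lsrc s t (cs!p)"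

text \<open>pcf s t P al b b' = coefficient of basis vector b' in (action of arrow al)(b).
For bands, the letter b_1 (index 0) acts by the Jordan block J(lam,q), all others by identity.\<close>
fun pcf :: "('a \<Rightarrow> 'v) \<Rightarrow> ('a \<Rightarrow> 'v) \<Rightarrow> ('v, 'a, 'k::field) piece \<Rightarrow> 'a \<Rightarrow> nat \<times> nat \<Rightarrow> nat \<times> nat \<Rightarrow> 'k" where
  "pcf s t (SP v cs) al (p, j) (p', j') =
     (\<Sum>i<length cs. (if cs!i = Dir al \<and> p = i \<and> p' = Suc i then 1 else 0)
                   + (if cs!i = Inv al \<and> p = Suc i \<and> p' = i then 1 else 0))"
| "pcf s t (BP cs lam q) al (p, j) (p', j') =
     (let m = length cs; M = (\<lambda>i. if i = 0 then jordan_block q lam else 1\<^sub>m q) in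
      (\<Sum>i<m. (if cs!i = Dir al \<and> p = i \<and> p' = Suc i mod m then M i $$ (j', j) else 0)
            + (if cs!i = Inv al \<and> p = Suc i mod m \<and> p' = i then M i $$ (j', j) else 0)))"

definition mbasis :: "('v, 'a, 'k) piece list \<Rightarrow> (nat \<times> nat \<times> nat) set" where
  "mbasis L = {(i, b). i < length L \<and> b \<in> pbasis (L!i)}"

definition mvert :: "('a \<Rightarrow> 'v) \<Rightarrow> ('a \<Rightarrow> 'v) \<Rightarrow> ('v, 'a, 'k) piece list \<Rightarrow> nat \<times> nat \<times> nat \<Rightarrow> 'v" where
  "mvert s t L y = (case y of (i, b) \<Rightarrow> pvert s t (L!i) b)"

definition mcf :: "('a \<Rightarrow> 'v) \<Rightarrow> ('a \<Rightarrow> 'v) \<Rightarrow> ('v, 'a, 'k::field) piece list \<Rightarrow> 'a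
                    \<Rightarrow> nat \<times> nat \<times> nat \<Rightarrow> nat \<times> nat \<times> nat \<Rightarrow> 'k" where
  "mcf s t L al y y' = (case y of (i, b) \<Rightarrow> case y' of (i', b') \<Rightarrow>
      if i = i' then pcf s t (L!i) al b b' else 0)"

definition dimvec :: "('a \<Rightarrow> 'v) \<Rightarrow> ('a \<Rightarrow> 'v) \<Rightarrow> ('v, 'a, 'k) piece list \<Rightarrow> 'v \<Rightarrow> nat" where
  "dimvec s t L v = card {y \<in> mbasis L. mvert s t L y = v}"

definition modvar :: "('a \<Rightarrow> 'v) \<Rightarrow> ('a \<Rightarrow> 'v) \<Rightarrow> ('a \<times> 'a) set \<Rightarrow> ('v \<Rightarrow> nat)
                     \<Rightarrow> ('a \<Rightarrow> 'k::field mat) set" where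
  "modvar s t R d = {x. (\<forall>al. x al \<in> carrier_mat (d (t al)) (d (s al))) \<and>
       (\<forall>(al, be) \<in> R. x be * x al = 0\<^sub>m (d (t be)) (d (s al)))}"

text \<open>x is the matrix representation of the direct sum of the pieces L with respect
to some ordering of its combinatorial basis.\<close>
definition realizes :: "('a \<Rightarrow> 'v) \<Rightarrow> ('a \<Rightarrow> 'v) \<Rightarrow> ('v \<Rightarrow> nat) \<Rightarrow> ('v, 'a, 'k::field) piece list
                        \<Rightarrow> ('a \<Rightarrow> 'k mat) \<Rightarrow> bool" where
  "realizes s t d L x \<longleftrightarrow> (\<forall>al. x al \<in> carrier_mat (d (t al)) (d (s al))) \<and>
     (\<exists>\<phi>. (\<forall>v. bij_betw \<phi> {y \<in> mbasis L. mvert s t L y = v} {..<d v}) \<and>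
          (\<forall>al y y'. y \<in> mbasis L \<longrightarrow> y' \<in> mbasis L \<longrightarrow> mvert s t L y = s al \<longrightarrow>
               mvert s t L y' = t al \<longrightarrow> x al $$ (\<phi> y', \<phi> y) = mcf s t L al y y'))"

definition is_GL :: "('v \<Rightarrow> nat) \<Rightarrow> ('v \<Rightarrow> 'k::field mat) \<Rightarrow> ('v \<Rightarrow> 'k mat) \<Rightarrow> bool" where
  "is_GL d g h \<longleftrightarrow> (\<forall>v. g v \<in> carrier_mat (d v) (d v) \<and> h v \<in> carrier_mat (d v) (d v) \<and>
       g v * h v = 1\<^sub>m (d v) \<and> h v * g v = 1\<^sub>m (d v))"

definition gl_act :: "('a \<Rightarrow> 'v) \<Rightarrow> ('a \<Rightarrow> 'v) \<Rightarrow> ('v \<Rightarrow> 'k::field mat) \<Rightarrow> ('v \<Rightarrow> 'k mat)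
                      \<Rightarrow> ('a \<Rightarrow> 'k mat) \<Rightarrow> ('a \<Rightarrow> 'k mat)" where
  "gl_act s t g h x = (\<lambda>al. g (t al) * x al * h (s al))"

definition module_orbit :: "('a \<Rightarrow> 'v) \<Rightarrow> ('a \<Rightarrow> 'v) \<Rightarrow> ('v \<Rightarrow> nat) \<Rightarrow> ('v, 'a, 'k::field) piece list
                            \<Rightarrow> ('a \<Rightarrow> 'k mat) set" where
  "module_orbit s t d L = {y. \<exists>g h x. is_GL d g h \<and> realizes s t d L x \<and> y = gl_act s t g h x}"

text \<open>Family of the multi-set of strings strs and bands B_j with multiplicities q_j:
union of orbits of sums of the M(C_i) and M(B_j, lam_jk, q_jk), (q_jk)_k a partition
of q_j, lam_jk nonzero.\<close>
definition family :: "('a \<Rightarrow> 'v) \<Rightarrow> ('a \<Rightarrow> 'v) \<Rightarrow> ('v \<Rightarrow> nat) \<Rightarrow> ('v \<times> 'a letter list) list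
                      \<Rightarrow> ('a letter list \<times> nat) list \<Rightarrow> ('a \<Rightarrow> 'k::field mat) set" where
  "family s t d strs bands = {y. \<exists>ps :: ('k \<times> nat) list list.
     length ps = length bands \<and>
     (\<forall>j < length bands. (\<Sum>(lam, q) \<leftarrow> ps!j. q) = snd (bands!j) \<and>
                         (\<forall>(lam, q) \<in> set (ps!j). lam \<noteq> 0 \<and> q > 0)) \<and>
     y \<in> module_orbit s t d
          (map (\<lambda>(v, cs). SP v cs) strs @
           concat (map (\<lambda>j. map (\<lambda>(lam, q). BP (fst (bands!j)) lam q) (ps!j)) [0..<length bands]))}"

inductive_set polyfun :: "('a \<Rightarrow> 'v) \<Rightarrow> ('a \<Rightarrow> 'v) \<Rightarrow> ('v \<Rightarrow> nat) \<Rightarrow> (('a \<Rightarrow> 'k::field mat) \<Rightarrow> 'k) set"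
  for s t d where
  pf_const: "(\<lambda>x. c) \<in> polyfun s t d"
| pf_coord: "i < d (t al) \<Longrightarrow> j < d (s al) \<Longrightarrow> (\<lambda>x. x al $$ (i, j)) \<in> polyfun s t d"
| pf_add: "f \<in> polyfun s t d \<Longrightarrow> g \<in> polyfun s t d \<Longrightarrow> (\<lambda>x. f x + g x) \<in> polyfun s t d"
| pf_mult: "f \<in> polyfun s t d \<Longrightarrow> g \<in> polyfun s t d \<Longrightarrow> (\<lambda>x. f x * g x) \<in> polyfun s t d"

definition zariski_closure :: "('a \<Rightarrow> 'v) \<Rightarrow> ('a \<Rightarrow> 'v) \<Rightarrow> ('a \<times> 'a) set \<Rightarrow> ('v \<Rightarrow> nat)
                               \<Rightarrow> ('a \<Rightarrow> 'k::field mat) set \<Rightarrow> ('a \<Rightarrow> 'k mat) set" where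
  "zariski_closure s t R d S = {x \<in> modvar s t R d.
      \<forall>f \<in> polyfun s t d. (\<forall>y \<in> S. f y = 0) \<longrightarrow> f x = 0}"

datatype ('v, 'a) strband = Str 'v "'a letter list" | Band "'a letter list"

fun is_strband :: "('a \<Rightarrow> 'v) \<Rightarrow> ('a \<Rightarrow> 'v) \<Rightarrow> ('a \<times> 'a) set \<Rightarrow> ('v, 'a) strband \<Rightarrow> bool" where
  "is_strband s t R (Str v cs) = is_string s t R (v, cs)"
| "is_strband s t R (Band cs) = is_band s t R cs"

fun sb_len :: "('v, 'a) strband \<Rightarrow> nat" where
  "sb_len (Str v cs) = length cs"
| "sb_len (Band cs) = length cs"

text \<open>Dimension vector of D (for a band: of M(D, lam, 1), independent of lam).\<close>
fun sb_dimvec :: "('a \<Rightarrow> 'v) \<Rightarrow> ('a \<Rightarrow> 'v) \<Rightarrow> ('v, 'a) strband \<Rightarrow> 'v \<Rightarrow> nat" where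
  "sb_dimvec s t (Str v cs) = dimvec s t [SP v cs :: ('v, 'a, nat) piece]"
| "sb_dimvec s t (Band cs) = dimvec s t [BP cs (1::nat) 1]"

fun sb_family :: "('a \<Rightarrow> 'v) \<Rightarrow> ('a \<Rightarrow> 'v) \<Rightarrow> ('v \<Rightarrow> nat) \<Rightarrow> ('v, 'a) strband
                  \<Rightarrow> ('a \<Rightarrow> 'k::field mat) set" where
  "sb_family s t d (Str v cs) = family s t d [(v, cs)] []"
| "sb_family s t d (Band cs) = family s t d [] [(cs, 1)]"

text \<open>D with the k-th arrow deleted (k is 1-based): a multi-set of strings.
For a string C: C_{<=k} = c_1..c_{k-1} from v_1, C_{>=k+1} = c_{k+1}..c_m from v_{k+1}.
For a band: b_{k+1}..b_m b_1..b_{k-1}, starting at the target of b_k.\<close>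
fun sb_hat :: "('a \<Rightarrow> 'v) \<Rightarrow> ('a \<Rightarrow> 'v) \<Rightarrow> ('v, 'a) strband \<Rightarrow> nat \<Rightarrow> ('v \<times> 'a letter list) list" where
  "sb_hat s t (Str v cs) k = [(v, take (k - 1) cs), (ltgt s t (cs!(k - 1)), drop k cs)]"
| "sb_hat s t (Band cs) k = [(ltgt s t (cs!(k - 1)), drop k cs @ take (k - 1) cs)]"

end

theory Submission
  imports Defs
begin

text \<open>Realise M(D) and the module of D with its k-th letter deleted on one vector space, whose
basis is indexed by the vertex positions of D: every letter acts along the walk with weight 1, except
the deleted letter, which acts with weight \<lambda>. For \<lambda> = 0 this is M(D with letter k deleted). For
\<lambda> \<noteq> 0 a diagonal base change moves \<lambda> away: for a string it becomes 1 and we get M(D); for a band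
it moves onto the distinguished first letter and we get M(D, \<mu>, 1) with \<mu> \<noteq> 0. The matrix
entries are affine in \<lambda>, so a polynomial function vanishing on O_D vanishes for all \<lambda> \<noteq> 0, hence,
K being infinite, also at \<lambda> = 0.\<close>

section \<open>Polynomial functions along an affine line\<close>

lemma alg_closed_infinite:
  assumes "alg_closed TYPE('k::field)"
  shows "infinite (UNIV :: 'k set)"
proof
  assume fin: "finite (UNIV :: 'k set)"
  define q :: "'k poly" where "q = (\<Prod>a\<in>UNIV. [:-a, 1:])"
  have "degree q = card (UNIV :: 'k set)"
    unfolding q_def by (subst degree_prod_eq_sum_degree) (auto simp: fin)
  moreover have "card {0, 1 :: 'k} \<le> card (UNIV :: 'k set)"
    using fin by (intro card_mono) auto
  ultimately have "degree (q + 1) > 0" by (simp add: degree_add_eq_left)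
  with assms obtain x where "poly (q + 1) x = 0" unfolding alg_closed_def by blast
  moreover have "poly q x = 0" unfolding q_def poly_prod
    by (rule prod_zero) (auto simp: fin)
  ultimately show False by simp
qed

lemma poly_0_eq_0_if_vanishes_on_nonzero:
  assumes "infinite (UNIV :: 'k::field set)" and "\<And>lam. lam \<noteq> 0 \<Longrightarrow> poly p (lam::'k) = 0"
  shows "poly p 0 = 0"
proof (cases "p = 0")
  case False
  have "UNIV - {0} \<subseteq> {x. poly p x = 0}" using assms(2) by auto
  with poly_roots_finite[OF False] have "finite (UNIV - {0::'k})" by (rule finite_subset[rotated])
  with assms(1) show ?thesis by simp
qed simp

lemma polyfun_on_affine_line:
  assumes "f \<in> polyfun s t d"
    and "\<And>lam al i j. i < d (t al) \<Longrightarrow> j < d (s al) \<Longrightarrow> X lam al $$ (i, j) = A al i j + lam * B al i j"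
  shows "\<exists>p. \<forall>lam. f (X lam) = poly p (lam :: 'k::field)"
  using assms(1)
proof induct
  case (pf_const c)
  show ?case by (intro exI[of _ "[:c:]"]) simp
next
  case (pf_coord i al j)
  then show ?case using assms(2) by (intro exI[of _ "[:A al i j, B al i j:]"]) simp
next
  case (pf_add f g)
  then obtain p q where "\<forall>lam. f (X lam) = poly p lam" "\<forall>lam. g (X lam) = poly q lam" by blast
  then show ?case by (intro exI[of _ "p + q"]) simp
next
  case (pf_mult f g)
  then obtain p q where "\<forall>lam. f (X lam) = poly p lam" "\<forall>lam. g (X lam) = poly q lam" by blast
  then show ?case by (intro exI[of _ "p * q"]) simp
qed

lemma mult_mat_affine:
  fixes G :: "'k::field mat"
  assumes G: "G \<in> carrier_mat n1 n2" and A: "A \<in> carrier_mat n2 n3" and E: "E \<in> carrier_mat n2 n3"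
    and H: "H \<in> carrier_mat n3 n4"
  shows "G * (A + lam \<cdot>\<^sub>m E) * H = G * A * H + lam \<cdot>\<^sub>m (G * E * H)"
proof -
  have "G * (A + lam \<cdot>\<^sub>m E) = G * A + lam \<cdot>\<^sub>m (G * E)"
    using G A E by (simp add: mult_add_distrib_mat[OF G] mult_smult_distrib[OF G E])
  moreover have "(G * A + lam \<cdot>\<^sub>m (G * E)) * H = G * A * H + lam \<cdot>\<^sub>m (G * E * H)"
    using G A E H by (simp add: add_mult_distrib_mat[of _ n1 n3] mult_smult_assoc_mat[of _ n1 n3])
  ultimately show ?thesis by simp
qed

lemma is_GL_mult:
  assumes "is_GL d g h" "is_GL d g' h'"
  shows "is_GL d (\<lambda>v. g v * g' v) (\<lambda>v. h' v * h v)"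
  unfolding is_GL_def
proof (intro allI conjI)
  fix v
  have c: "g v \<in> carrier_mat (d v) (d v)" "h v \<in> carrier_mat (d v) (d v)"
    "g' v \<in> carrier_mat (d v) (d v)" "h' v \<in> carrier_mat (d v) (d v)"
    and e: "g v * h v = 1\<^sub>m (d v)" "h v * g v = 1\<^sub>m (d v)" "g' v * h' v = 1\<^sub>m (d v)" "h' v * g' v = 1\<^sub>m (d v)"
    using assms unfolding is_GL_def by auto
  show "g v * g' v \<in> carrier_mat (d v) (d v)" "h' v * h v \<in> carrier_mat (d v) (d v)" using c by auto
  have "g v * g' v * (h' v * h v) = g v * (g' v * (h' v * h v))" using c by (subst assoc_mult_mat) auto
  also have "g' v * (h' v * h v) = (g' v * h' v) * h v" using c by (subst assoc_mult_mat) auto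
  finally show "g v * g' v * (h' v * h v) = 1\<^sub>m (d v)" using e c by simp
  have "h' v * h v * (g v * g' v) = h' v * (h v * (g v * g' v))" using c by (subst assoc_mult_mat) auto
  also have "h v * (g v * g' v) = (h v * g v) * g' v" using c by (subst assoc_mult_mat) auto
  finally show "h' v * h v * (g v * g' v) = 1\<^sub>m (d v)" using e c by simp
qed

lemma gl_act_compose:
  fixes x :: "'a \<Rightarrow> 'k::field mat"
  assumes "is_GL d g h" "is_GL d g' h'" "\<And>al. x al \<in> carrier_mat (d (t al)) (d (s al))"
  shows "gl_act s t g h (gl_act s t g' h' x) = gl_act s t (\<lambda>v. g v * g' v) (\<lambda>v. h' v * h v) x"
proof
  fix al
  define A B C D E where "A = g (t al)" "B = g' (t al)" "C = x al" "D = h' (s al)" "E = h (s al)"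
  have c: "A \<in> carrier_mat (d (t al)) (d (t al))" "B \<in> carrier_mat (d (t al)) (d (t al))"
    "C \<in> carrier_mat (d (t al)) (d (s al))"
    "D \<in> carrier_mat (d (s al)) (d (s al))" "E \<in> carrier_mat (d (s al)) (d (s al))"
    using assms unfolding is_GL_def A_B_C_D_E_def by auto
  have "A * (B * C * D) * E = A * ((B * C * D) * E)" using c by (subst assoc_mult_mat) auto
  also have "(B * C * D) * E = (B * C) * (D * E)" using c by (subst assoc_mult_mat) auto
  also have "A * ((B * C) * (D * E)) = (A * (B * C)) * (D * E)" using c by (subst assoc_mult_mat) auto
  also have "A * (B * C) = (A * B) * C" using c by (subst assoc_mult_mat) auto
  finally show "gl_act s t g h (gl_act s t g' h' x) al = gl_act s t (\<lambda>v. g v * g' v) (\<lambda>v. h' v * h v) x al"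
    unfolding gl_act_def A_B_C_D_E_def .
qed

lemma mult_conjugates_eq_0:
  fixes G :: "'k::field mat"
  assumes G: "G \<in> carrier_mat n n" and B: "B \<in> carrier_mat n m" and H: "H \<in> carrier_mat m m"
    and G': "G' \<in> carrier_mat m m" and A: "A \<in> carrier_mat m l" and H': "H' \<in> carrier_mat l l"
    and HG': "H * G' = 1\<^sub>m m" and BA: "B * A = 0\<^sub>m n l"
  shows "G * B * H * (G' * A * H') = 0\<^sub>m n l"
proof -
  have GB: "G * B \<in> carrier_mat n m" and AH: "A * H' \<in> carrier_mat m l" using G B A H' by auto
  have "G * B * H * (G' * A * H') = (G * B) * (H * (G' * (A * H')))"
    unfolding assoc_mult_mat[OF G' A H'] by (rule assoc_mult_mat[OF GB H mult_carrier_mat[OF G' AH]])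
  also have "\<dots> = (G * B) * ((H * G') * (A * H'))" by (simp only: assoc_mult_mat[OF H G' AH])
  also have "\<dots> = (G * B) * (A * H')" using HG' left_mult_one_mat[OF AH] by simp
  also have "\<dots> = ((G * B) * A) * H'" by (simp only: assoc_mult_mat[OF GB A H'])
  also have "\<dots> = (G * (B * A)) * H'" by (simp only: assoc_mult_mat[OF G B A])
  finally show ?thesis using G H' BA by simp
qed

lemma gl_act_in_modvar:
  fixes x :: "'a \<Rightarrow> 'k::field mat"
  assumes gl: "is_GL d g h" and x: "x \<in> modvar s t R d" and st: "\<forall>(al, be) \<in> R. t al = s be"
  shows "gl_act s t g h x \<in> modvar s t R d"
  unfolding modvar_def
proof (intro CollectI conjI allI ballI)
  have g: "\<And>v. g v \<in> carrier_mat (d v) (d v)" and h: "\<And>v. h v \<in> carrier_mat (d v) (d v)"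
    and hg: "\<And>v. h v * g v = 1\<^sub>m (d v)" using gl unfolding is_GL_def by auto
  have cx: "\<And>al. x al \<in> carrier_mat (d (t al)) (d (s al))" using x unfolding modvar_def by auto
  show "gl_act s t g h x al \<in> carrier_mat (d (t al)) (d (s al))" for al
    unfolding gl_act_def using g h cx by (meson mult_carrier_mat)
  fix r assume "r \<in> R"
  then obtain al be where r: "r = (al, be)" and rel: "(al, be) \<in> R" by (cases r) auto
  have st': "t al = s be" using st rel by auto
  have "x be * x al = 0\<^sub>m (d (t be)) (d (s al))" using x rel unfolding modvar_def by auto
  then have "g (t be) * x be * h (s be) * (g (s be) * x al * h (s al)) = 0\<^sub>m (d (t be)) (d (s al))"
    using g h hg cx[of be] cx[of al] st' by (intro mult_conjugates_eq_0[where m = "d (s be)"]) auto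
  then show "case r of (al, be) \<Rightarrow> gl_act s t g h x be * gl_act s t g h x al = 0\<^sub>m (d (t be)) (d (s al))"
    unfolding r gl_act_def using st' by simp
qed

lemma is_GL_mat_diag:
  assumes "\<And>v i. i < d v \<Longrightarrow> a v i \<noteq> (0::'k::field)"
  shows "is_GL d (\<lambda>v. mat_diag (d v) (a v)) (\<lambda>v. mat_diag (d v) (\<lambda>i. 1 / a v i))"
  unfolding is_GL_def mat_diag_diag using assms by (auto simp: mat_diag_def)

lemma gl_act_inverse:
  fixes x :: "'a \<Rightarrow> 'k::field mat"
  assumes gl: "is_GL d g h" and cx: "\<And>al. x al \<in> carrier_mat (d (t al)) (d (s al))"
  shows "gl_act s t g h (gl_act s t h g x) = x"
proof -
  have gl': "is_GL d h g" using gl unfolding is_GL_def by auto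
  have gh: "\<And>v. g v * h v = 1\<^sub>m (d v)" using gl unfolding is_GL_def by auto
  have "gl_act s t g h (gl_act s t h g x) = gl_act s t (\<lambda>v. g v * h v) (\<lambda>v. g v * h v) x"
    by (rule gl_act_compose[OF gl gl' cx])
  also have "\<dots> = x" unfolding gh gl_act_def
  proof
    fix al show "1\<^sub>m (d (t al)) * x al * 1\<^sub>m (d (s al)) = x al" using cx[of al] by simp
  qed
  finally show ?thesis .
qed

lemma module_orbit_gl_act:
  fixes y :: "'a \<Rightarrow> 'k::field mat"
  assumes gl: "is_GL d g h" and y: "y \<in> module_orbit s t d L"
  shows "gl_act s t g h y \<in> module_orbit s t d L"
proof -
  obtain g' h' x where gl': "is_GL d g' h'" and x: "realizes s t d L x" and y: "y = gl_act s t g' h' x"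
    using y unfolding module_orbit_def by blast
  have "gl_act s t g h y = gl_act s t (\<lambda>v. g v * g' v) (\<lambda>v. h' v * h v) x"
    unfolding y using x unfolding realizes_def by (intro gl_act_compose[OF gl gl']) blast
  with is_GL_mult[OF gl gl'] x show ?thesis unfolding module_orbit_def by blast
qed

text \<open>The basis vectors of a module are indexed by positions p \<in> P lying over the vertices vtx p;
\<Phi> numbers the positions over each vertex v by the standard basis of K^(d v), and has_coeffs says
that in this basis the arrow al sends position p to cf al p p' times position p'.\<close>

definition vertex_enum :: "('v \<Rightarrow> nat) \<Rightarrow> nat set \<Rightarrow> (nat \<Rightarrow> 'v) \<Rightarrow> (nat \<Rightarrow> nat) \<Rightarrow> bool" where
  "vertex_enum d P vtx \<Phi> \<longleftrightarrow> (\<forall>v. bij_betw \<Phi> {p \<in> P. vtx p = v} {..<d v})"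

definition has_coeffs :: "('a \<Rightarrow> 'v) \<Rightarrow> ('a \<Rightarrow> 'v) \<Rightarrow> ('v \<Rightarrow> nat) \<Rightarrow> nat set \<Rightarrow> (nat \<Rightarrow> 'v)
    \<Rightarrow> (nat \<Rightarrow> nat) \<Rightarrow> ('a \<Rightarrow> 'k::field mat) \<Rightarrow> ('a \<Rightarrow> nat \<Rightarrow> nat \<Rightarrow> 'k) \<Rightarrow> bool" where
  "has_coeffs s t d P vtx \<Phi> x cf \<longleftrightarrow> (\<forall>al. x al \<in> carrier_mat (d (t al)) (d (s al))) \<and>
     (\<forall>al p p'. p \<in> P \<longrightarrow> p' \<in> P \<longrightarrow> vtx p = s al \<longrightarrow> vtx p' = t al \<longrightarrow>
        x al $$ (\<Phi> p', \<Phi> p) = cf al p p')"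

definition indexes_pieces :: "('a \<Rightarrow> 'v) \<Rightarrow> ('a \<Rightarrow> 'v) \<Rightarrow> ('v, 'a, 'k::field) piece list \<Rightarrow> nat set
    \<Rightarrow> (nat \<Rightarrow> 'v) \<Rightarrow> ('a \<Rightarrow> nat \<Rightarrow> nat \<Rightarrow> 'k) \<Rightarrow> (nat \<Rightarrow> nat \<times> nat \<times> nat) \<Rightarrow> bool" where
  "indexes_pieces s t L P vtx cf psi \<longleftrightarrow> bij_betw psi P (mbasis L) \<and>
     (\<forall>p \<in> P. mvert s t L (psi p) = vtx p) \<and>
     (\<forall>al p p'. p \<in> P \<longrightarrow> p' \<in> P \<longrightarrow> vtx p = s al \<longrightarrow> vtx p' = t al \<longrightarrow>
        mcf s t L al (psi p) (psi p') = cf al p p')"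

lemma has_coeffs_carrier: "has_coeffs s t d P vtx \<Phi> x cf \<Longrightarrow> x al \<in> carrier_mat (d (t al)) (d (s al))"
  unfolding has_coeffs_def by blast

lemma vertex_enum_less: "vertex_enum d P vtx \<Phi> \<Longrightarrow> p \<in> P \<Longrightarrow> \<Phi> p < d (vtx p)"
  unfolding vertex_enum_def bij_betw_def by auto

lemma vertex_enum_surj:
  assumes "vertex_enum d P vtx \<Phi>" "i < d v"
  obtains p where "p \<in> P" "vtx p = v" "\<Phi> p = i"
proof -
  from assms have "i \<in> \<Phi> ` {p \<in> P. vtx p = v}" unfolding vertex_enum_def bij_betw_def by auto
  then show ?thesis using that by auto
qed

lemma vertex_enum_inv:
  assumes "vertex_enum d P vtx \<Phi>" "p \<in> P" "vtx p = v"
  shows "inv_into {p \<in> P. vtx p = v} \<Phi> (\<Phi> p) = p"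
  using assms unfolding vertex_enum_def bij_betw_def by (auto intro: inv_into_f_f)

lemma vertex_enum_inv_mem:
  assumes "vertex_enum d P vtx \<Phi>" "i < d v"
  shows "inv_into {p \<in> P. vtx p = v} \<Phi> i \<in> P"
proof -
  obtain p where "p \<in> P" "vtx p = v" "\<Phi> p = i" using vertex_enum_surj[OF assms] .
  then show ?thesis using vertex_enum_inv[OF assms(1)] by force
qed

lemma has_coeffs_in_modvar:
  fixes x :: "'a \<Rightarrow> 'k::field mat"
  assumes en: "vertex_enum d P vtx \<Phi>" and x: "has_coeffs s t d P vtx \<Phi> x cf"
    and st: "\<forall>(al, be) \<in> R. t al = s be"
    and rel: "\<And>al be p p' p''. (al, be) \<in> R \<Longrightarrow> cf be p' p'' * cf al p p' = 0"
  shows "x \<in> modvar s t R d"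
  unfolding modvar_def
proof (intro CollectI conjI allI ballI)
  show "x al \<in> carrier_mat (d (t al)) (d (s al))" for al by (rule has_coeffs_carrier[OF x])
  fix r assume "r \<in> R"
  then obtain al be where r: "r = (al, be)" and ab: "(al, be) \<in> R" by (cases r) auto
  have st': "t al = s be" using st ab by auto
  have "x be * x al = 0\<^sub>m (d (t be)) (d (s al))"
  proof (rule eq_matI)
    fix i j
    assume "i < dim_row (0\<^sub>m (d (t be)) (d (s al)) :: 'k mat)" "j < dim_col (0\<^sub>m (d (t be)) (d (s al)) :: 'k mat)"
    hence i: "i < d (t be)" and j: "j < d (s al)" by auto
    obtain p'' where p'': "p'' \<in> P" "vtx p'' = t be" "\<Phi> p'' = i" using vertex_enum_surj[OF en i] .
    obtain p where p: "p \<in> P" "vtx p = s al" "\<Phi> p = j" using vertex_enum_surj[OF en j] .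
    have "(x be * x al) $$ (i, j) = (\<Sum>l \<in> {0..<d (t al)}. x be $$ (i, l) * x al $$ (l, j))"
      using has_coeffs_carrier[OF x, of be] has_coeffs_carrier[OF x, of al] i j st'
      by (simp add: scalar_prod_def)
    also have "\<dots> = 0"
    proof (rule sum.neutral, rule ballI)
      fix l assume "l \<in> {0..<d (t al)}"
      then obtain p' where p': "p' \<in> P" "vtx p' = t al" "\<Phi> p' = l" using vertex_enum_surj[OF en] by auto
      have "x be $$ (i, l) = cf be p' p''" using x p' p'' st' unfolding has_coeffs_def by auto
      moreover have "x al $$ (l, j) = cf al p p'" using x p' p unfolding has_coeffs_def by auto
      ultimately show "x be $$ (i, l) * x al $$ (l, j) = 0" using rel[OF ab] by simp
    qed
    finally show "(x be * x al) $$ (i, j) = 0\<^sub>m (d (t be)) (d (s al)) $$ (i, j)" using i j by simp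
  qed (use has_coeffs_carrier[OF x, of be] has_coeffs_carrier[OF x, of al] in auto)
  then show "case r of (al, be) \<Rightarrow> x be * x al = 0\<^sub>m (d (t be)) (d (s al))" using r by simp
qed

lemma has_coeffs_affine_line:
  fixes x0 :: "'a \<Rightarrow> 'k::field mat"
  assumes en: "vertex_enum d P vtx \<Phi>" and x0: "has_coeffs s t d P vtx \<Phi> x0 cf"
  shows "\<exists>E. (\<forall>al. E al \<in> carrier_mat (d (t al)) (d (s al))) \<and>
    (\<forall>lam. has_coeffs s t d P vtx \<Phi> (\<lambda>al. x0 al + lam \<cdot>\<^sub>m E al) (\<lambda>al p p'. cf al p p' + lam * cf' al p p'))"
proof -
  define \<Psi> where "\<Psi> v = inv_into {p \<in> P. vtx p = v} \<Phi>" for v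
  define E where "E al = mat (d (t al)) (d (s al)) (\<lambda>(i, j). cf' al (\<Psi> (s al) j) (\<Psi> (t al) i))" for al
  have "has_coeffs s t d P vtx \<Phi> (\<lambda>al. x0 al + lam \<cdot>\<^sub>m E al) (\<lambda>al p p'. cf al p p' + lam * cf' al p p')" for lam
    unfolding has_coeffs_def
  proof (intro conjI allI impI)
    fix al show "x0 al + lam \<cdot>\<^sub>m E al \<in> carrier_mat (d (t al)) (d (s al))"
      using has_coeffs_carrier[OF x0] unfolding E_def by auto
  next
    fix al p p' assume pp: "p \<in> P" "p' \<in> P" "vtx p = s al" "vtx p' = t al"
    have r: "\<Phi> p < d (s al)" "\<Phi> p' < d (t al)" using vertex_enum_less[OF en] pp by force+
    have cE: "E al \<in> carrier_mat (d (t al)) (d (s al))" unfolding E_def by simp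
    have "E al $$ (\<Phi> p', \<Phi> p) = cf' al p p'"
      unfolding E_def \<Psi>_def using r vertex_enum_inv[OF en] pp by simp
    moreover have "x0 al $$ (\<Phi> p', \<Phi> p) = cf al p p'" using x0 pp unfolding has_coeffs_def by auto
    ultimately show "(x0 al + lam \<cdot>\<^sub>m E al) $$ (\<Phi> p', \<Phi> p) = cf al p p' + lam * cf' al p p'"
      using r has_coeffs_carrier[OF x0, of al] cE by simp
  qed
  moreover have "E al \<in> carrier_mat (d (t al)) (d (s al))" for al unfolding E_def by simp
  ultimately show ?thesis by blast
qed

text \<open>Along the line of coefficients cf + lam * cf', f is a polynomial in lam; vanishing for all
lam \<noteq> 0, it has infinitely many roots, so it also vanishes at lam = 0.\<close>

lemma polyfun_vanishes_at_degeneration: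
  fixes x0 :: "'a \<Rightarrow> 'k::field mat"
  assumes inf: "infinite (UNIV :: 'k set)"
    and en: "vertex_enum d P vtx \<Phi>"
    and x0: "has_coeffs s t d P vtx \<Phi> x0 cf"
    and gl: "is_GL d g h"
    and f: "f \<in> polyfun s t d"
    and van: "\<And>lam x. lam \<noteq> 0 \<Longrightarrow> has_coeffs s t d P vtx \<Phi> x (\<lambda>al p p'. cf al p p' + lam * cf' al p p')
                \<Longrightarrow> f (gl_act s t g h x) = 0"
  shows "f (gl_act s t g h x0) = 0"
proof -
  obtain E where E: "\<And>al. E al \<in> carrier_mat (d (t al)) (d (s al))"
    and line: "\<And>lam. has_coeffs s t d P vtx \<Phi> (\<lambda>al. x0 al + lam \<cdot>\<^sub>m E al)
                         (\<lambda>al p p'. cf al p p' + lam * cf' al p p')"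
    using has_coeffs_affine_line[OF en x0] by blast
  define X where "X lam = gl_act s t g h (\<lambda>al. x0 al + lam \<cdot>\<^sub>m E al)" for lam
  have g: "\<And>v. g v \<in> carrier_mat (d v) (d v)" and h: "\<And>v. h v \<in> carrier_mat (d v) (d v)"
    using gl unfolding is_GL_def by auto
  have aff: "X lam al $$ (i, j)
      = (g (t al) * x0 al * h (s al)) $$ (i, j) + lam * (g (t al) * E al * h (s al)) $$ (i, j)"
    if "i < d (t al)" "j < d (s al)" for lam al i j
    using that g[of "t al"] h[of "s al"] unfolding X_def gl_act_def
    by (simp add: mult_mat_affine[OF g has_coeffs_carrier[OF x0] E h])
  then obtain q where q: "\<And>lam. f (X lam) = poly q lam"
    using polyfun_on_affine_line[OF f, where X = X and A = "\<lambda>al i j. (g (t al) * x0 al * h (s al)) $$ (i, j)"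
        and B = "\<lambda>al i j. (g (t al) * E al * h (s al)) $$ (i, j)"] aff by blast
  have "poly q lam = 0" if "lam \<noteq> 0" for lam
    using van[OF that line] q unfolding X_def by simp
  then have "f (X 0) = 0" using poly_0_eq_0_if_vanishes_on_nonzero[OF inf] q by metis
  moreover have "(\<lambda>al. x0 al + 0 \<cdot>\<^sub>m E al) = x0"
  proof
    fix al show "x0 al + 0 \<cdot>\<^sub>m E al = x0 al"
      using has_coeffs_carrier[OF x0, of al] E[of al] by (intro eq_matI) auto
  qed
  ultimately show ?thesis unfolding X_def by simp
qed

text \<open>Rescaling the basis vector at position p by e p turns the coefficient cf al p p' into
cf al p p' * e p / e p'; the base change is diagonal.\<close>

lemma rescaled_in_module_orbit:
  fixes x :: "'a \<Rightarrow> 'k::field mat"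
  assumes en: "vertex_enum d P vtx \<Phi>"
    and x: "has_coeffs s t d P vtx \<Phi> x cf"
    and e: "\<forall>p \<in> P. e p \<noteq> 0"
    and gl: "is_GL d g h"
    and realizes: "\<And>x'. has_coeffs s t d P vtx \<Phi> x' (\<lambda>al p p'. cf al p p' * e p / e p') \<Longrightarrow> realizes s t d L x'"
  shows "gl_act s t g h x \<in> module_orbit s t d L"
proof -
  define a where "a v i = e (inv_into {p \<in> P. vtx p = v} \<Phi> i)" for v i
  have "a v i \<noteq> 0" if "i < d v" for v i
    using vertex_enum_inv_mem[OF en that] e unfolding a_def by auto
  then have gl_c: "is_GL d (\<lambda>v. mat_diag (d v) (a v)) (\<lambda>v. mat_diag (d v) (\<lambda>i. 1 / a v i))"
    by (rule is_GL_mat_diag)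
  have cx: "\<And>al. x al \<in> carrier_mat (d (t al)) (d (s al))" using has_coeffs_carrier[OF x] .
  define x' where "x' = gl_act s t (\<lambda>v. mat_diag (d v) (\<lambda>i. 1 / a v i)) (\<lambda>v. mat_diag (d v) (a v)) x"
  have "has_coeffs s t d P vtx \<Phi> x' (\<lambda>al p p'. cf al p p' * e p / e p')"
    unfolding has_coeffs_def
  proof (intro conjI allI impI)
    fix al show "x' al \<in> carrier_mat (d (t al)) (d (s al))"
      unfolding x'_def gl_act_def by (intro mult_carrier_mat[OF mult_carrier_mat[OF mat_diag_dim cx] mat_diag_dim])
  next
    fix al p p' assume pp: "p \<in> P" "p' \<in> P" "vtx p = s al" "vtx p' = t al"
    have r: "\<Phi> p < d (s al)" "\<Phi> p' < d (t al)" using vertex_enum_less[OF en] pp by force+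
    have "x' al $$ (\<Phi> p', \<Phi> p) = 1 / a (t al) (\<Phi> p') * x al $$ (\<Phi> p', \<Phi> p) * a (s al) (\<Phi> p)"
      unfolding x'_def gl_act_def using cx[of al] r
      by (simp add: mat_diag_mult_left[of _ "d (t al)" "d (s al)"] mat_diag_mult_right[of _ "d (t al)" "d (s al)"])
    also have "\<dots> = 1 / e p' * cf al p p' * e p"
      using x pp vertex_enum_inv[OF en] unfolding has_coeffs_def a_def by auto
    finally show "x' al $$ (\<Phi> p', \<Phi> p) = cf al p p' * e p / e p'" by simp
  qed
  then have "gl_act s t (\<lambda>v. mat_diag (d v) (a v)) (\<lambda>v. mat_diag (d v) (\<lambda>i. 1 / a v i)) x' \<in> module_orbit s t d L"
    using gl_c realizes unfolding module_orbit_def by blast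
  moreover have "gl_act s t (\<lambda>v. mat_diag (d v) (a v)) (\<lambda>v. mat_diag (d v) (\<lambda>i. 1 / a v i)) x' = x"
    unfolding x'_def by (rule gl_act_inverse[OF gl_c cx])
  ultimately show ?thesis using module_orbit_gl_act[OF gl] by metis
qed

lemma bij_betw_restrict_fibres:
  assumes "bij_betw f A B" "\<forall>a \<in> A. g (f a) = h a"
  shows "bij_betw f {a \<in> A. h a = v} {b \<in> B. g b = v}"
  using assms unfolding bij_betw_def inj_on_def by (auto simp: image_iff)

lemma realizes_has_coeffs:
  fixes x :: "'a \<Rightarrow> 'k::field mat"
  assumes ip: "indexes_pieces s t L P vtx cf psi" and x: "realizes s t d L x"
  obtains \<Phi> where "vertex_enum d P vtx \<Phi>" "has_coeffs s t d P vtx \<Phi> x cf"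
proof -
  have bij: "bij_betw psi P (mbasis L)" and vert: "\<forall>p \<in> P. mvert s t L (psi p) = vtx p"
    and coeff: "\<And>al p p'. p \<in> P \<Longrightarrow> p' \<in> P \<Longrightarrow> vtx p = s al \<Longrightarrow> vtx p' = t al \<Longrightarrow>
        mcf s t L al (psi p) (psi p') = cf al p p'"
    using ip unfolding indexes_pieces_def by auto
  obtain \<phi> where cx: "\<forall>al. x al \<in> carrier_mat (d (t al)) (d (s al))"
    and b: "\<And>v. bij_betw \<phi> {y \<in> mbasis L. mvert s t L y = v} {..<d v}"
    and e: "\<And>al y y'. y \<in> mbasis L \<Longrightarrow> y' \<in> mbasis L \<Longrightarrow> mvert s t L y = s al \<Longrightarrow>
             mvert s t L y' = t al \<Longrightarrow> x al $$ (\<phi> y', \<phi> y) = mcf s t L al y y'"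
    using x unfolding realizes_def by blast
  have fibre: "bij_betw psi {p \<in> P. vtx p = v} {y \<in> mbasis L. mvert s t L y = v}" for v
    by (rule bij_betw_restrict_fibres[OF bij]) (use vert in auto)
  have "vertex_enum d P vtx (\<phi> \<circ> psi)"
    unfolding vertex_enum_def by (intro allI bij_betw_trans[OF fibre b])
  moreover have "has_coeffs s t d P vtx (\<phi> \<circ> psi) x cf" unfolding has_coeffs_def
  proof (intro conjI allI impI)
    fix al p p' assume pp: "p \<in> P" "p' \<in> P" "vtx p = s al" "vtx p' = t al"
    then have "psi p \<in> mbasis L" "psi p' \<in> mbasis L" using bij unfolding bij_betw_def by auto
    then show "x al $$ ((\<phi> \<circ> psi) p', (\<phi> \<circ> psi) p) = cf al p p'"
      using e coeff pp vert by simp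
  qed (use cx in auto)
  ultimately show ?thesis using that by blast
qed

lemma has_coeffs_realizes:
  fixes x :: "'a \<Rightarrow> 'k::field mat"
  assumes ip: "indexes_pieces s t L P vtx cf psi"
    and en: "vertex_enum d P vtx \<Phi>" and x: "has_coeffs s t d P vtx \<Phi> x cf"
  shows "realizes s t d L x"
proof -
  have bij: "bij_betw psi P (mbasis L)" and vert: "\<forall>p \<in> P. mvert s t L (psi p) = vtx p"
    and coeff: "\<And>al p p'. p \<in> P \<Longrightarrow> p' \<in> P \<Longrightarrow> vtx p = s al \<Longrightarrow> vtx p' = t al \<Longrightarrow>
        mcf s t L al (psi p) (psi p') = cf al p p'"
    using ip unfolding indexes_pieces_def by auto
  define pos where "pos = inv_into P psi"
  have pos: "pos y \<in> P" "psi (pos y) = y" if "y \<in> mbasis L" for y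
    using that bij unfolding pos_def bij_betw_def by (auto intro: inv_into_into f_inv_into_f)
  have vert_pos: "vtx (pos y) = mvert s t L y" if y: "y \<in> mbasis L" for y
    using vert[rule_format, OF pos(1)[OF y]] pos(2)[OF y] by simp
  have "bij_betw pos (mbasis L) P" unfolding pos_def by (rule bij_betw_inv_into[OF bij])
  then have fibre: "bij_betw pos {y \<in> mbasis L. mvert s t L y = v} {p \<in> P. vtx p = v}" for v
    by (rule bij_betw_restrict_fibres) (use vert_pos in blast)
  show "realizes s t d L x" unfolding realizes_def
  proof (intro conjI exI[of _ "\<Phi> \<circ> pos"] allI impI)
    show "x al \<in> carrier_mat (d (t al)) (d (s al))" for al by (rule has_coeffs_carrier[OF x])
    show "bij_betw (\<Phi> \<circ> pos) {y \<in> mbasis L. mvert s t L y = v} {..<d v}" for v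
      using en unfolding vertex_enum_def by (intro bij_betw_trans[OF fibre]) blast
  next
    fix al y y'
    assume y: "y \<in> mbasis L" "y' \<in> mbasis L" "mvert s t L y = s al" "mvert s t L y' = t al"
    have v: "vtx (pos y) = s al" "vtx (pos y') = t al" using vert_pos y by simp_all
    have "x al $$ (\<Phi> (pos y'), \<Phi> (pos y)) = cf al (pos y) (pos y')"
      using x pos(1)[OF y(1)] pos(1)[OF y(2)] v unfolding has_coeffs_def by blast
    also have "\<dots> = mcf s t L al y y'"
      using coeff[OF pos(1)[OF y(1)] pos(1)[OF y(2)] v] pos(2)[OF y(1)] pos(2)[OF y(2)] by simp
    finally show "x al $$ ((\<Phi> \<circ> pos) y', (\<Phi> \<circ> pos) y) = mcf s t L al y y'" by simp
  qed
qed

text \<open>Letter i of the walk cs joins the positions i and nx i (nx = Suc for a string, the cyclic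
successor for a band) and acts with weight w i; walk_cf nx m cs w al p p' is the resulting coefficient
of position p' in the image of position p under the arrow al.\<close>

definition walk_cf :: "(nat \<Rightarrow> nat) \<Rightarrow> nat \<Rightarrow> 'a letter list \<Rightarrow> (nat \<Rightarrow> 'k::field) \<Rightarrow> 'a \<Rightarrow> nat \<Rightarrow> nat \<Rightarrow> 'k" where
  "walk_cf nx m cs w al p p' = (if p < m \<and> p' = nx p \<and> cs!p = Dir al then w p else 0)
     + (if p' < m \<and> p = nx p' \<and> cs!p' = Inv al then w p' else 0)"

definition weight_at :: "nat \<Rightarrow> 'k::field \<Rightarrow> nat \<Rightarrow> 'k" where
  "weight_at c lam i = (if i = c then lam else 1)"

fun direct :: "'a letter \<Rightarrow> bool" where
  "direct (Dir a) = True"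
| "direct (Inv a) = False"

lemma walk_cf_affine:
  fixes u v :: "nat \<Rightarrow> 'k::field"
  shows "walk_cf nx m cs (\<lambda>i. u i + lam * v i) al p p'
           = walk_cf nx m cs u al p p' + lam * walk_cf nx m cs v al p p'"
proof -
  have if_affine: "(if A then x + lam * y else 0) = (if A then x else 0) + lam * (if A then y else 0)"
    for A and x y :: 'k
    by simp
  show ?thesis unfolding walk_cf_def if_affine distrib_left by (simp only: add_ac)
qed

lemma walk_cf_weight_at_affine:
  "(\<lambda>al p p'. walk_cf nx m cs (weight_at c 0) al p p' + lam * walk_cf nx m cs (\<lambda>i. if i = c then 1 else 0) al p p')
     = walk_cf nx m cs (weight_at c lam)"
proof -
  have w: "weight_at c lam = (\<lambda>i. weight_at c 0 i + lam * (if i = c then 1 else 0))"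
    unfolding weight_at_def by auto
  show ?thesis unfolding w by (intro ext) (simp only: walk_cf_affine)
qed

lemma walk_cf_cong: "(\<And>i. i < m \<Longrightarrow> w i = w' i) \<Longrightarrow> walk_cf nx m cs w = walk_cf nx m cs w'"
  unfolding walk_cf_def by (intro ext) auto

lemma walk_cf_rescale:
  "(\<lambda>al p p'. walk_cf nx m cs w al p p' * e p / e p') =
   walk_cf nx m cs (\<lambda>i. w i * (if direct (cs!i) then e i / e (nx i) else e (nx i) / e i))"
  unfolding walk_cf_def by (intro ext) (auto simp: algebra_simps add_divide_distrib)

lemma walk_cf_nonzeroD:
  assumes "walk_cf nx m cs w al p p' \<noteq> 0"
  shows "p < m \<and> p' = nx p \<and> cs!p = Dir al \<or> p' < m \<and> p = nx p' \<and> cs!p' = Inv al"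
proof (rule ccontr)
  assume "\<not> ?thesis"
  then have "\<not> (p < m \<and> p' = nx p \<and> cs!p = Dir al)" "\<not> (p' < m \<and> p = nx p' \<and> cs!p' = Inv al)"
    by blast+
  then have "walk_cf nx m cs w al p p' = 0" unfolding walk_cf_def by (simp only: if_False add_0)
  with assms show False by contradiction
qed

text \<open>A nonzero product needs the letters al, be (or be\<inverse>, al\<inverse>) at consecutive positions,
or, by injectivity of nx, a letter that is both direct and inverse.\<close>

lemma walk_cf_relation:
  assumes inj: "inj_on nx {..<m}"
    and no_rel: "\<And>i. i < m \<Longrightarrow> nx i < m \<Longrightarrow>
        \<not> (cs!i = Dir al \<and> cs!(nx i) = Dir be) \<and> \<not> (cs!i = Inv be \<and> cs!(nx i) = Inv al)"
  shows "walk_cf nx m cs w be p' p'' * walk_cf nx m cs w al p p' = 0"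
proof -
  have "walk_cf nx m cs w al p p' = 0 \<or> walk_cf nx m cs w be p' p'' = 0"
  proof (rule ccontr)
    assume "\<not> ?thesis"
    then have "walk_cf nx m cs w al p p' \<noteq> 0" "walk_cf nx m cs w be p' p'' \<noteq> 0" by simp_all
    note al = walk_cf_nonzeroD[OF this(1)] and be = walk_cf_nonzeroD[OF this(2)]
    from al be show False
    proof (elim disjE conjE)
      assume "p < m" "p' = nx p" "cs!p = Dir al" "p' < m" "cs!p' = Dir be"
      then show False using no_rel[of p] by simp
    next
      assume "p < m" "p' = nx p" "cs!p = Dir al" "p'' < m" "p' = nx p''" "cs!p'' = Inv be"
      then have "p = p''" using inj unfolding inj_on_def by simp
      with \<open>cs!p = Dir al\<close> \<open>cs!p'' = Inv be\<close> show False by simp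
    next
      assume "cs!p' = Inv al" "cs!p' = Dir be"
      then show False by simp
    next
      assume "p' < m" "cs!p' = Inv al" "p'' < m" "p' = nx p''" "cs!p'' = Inv be"
      then show False using no_rel[of p''] by simp
    qed
  qed
  then show ?thesis by auto
qed

lemma sum_if_eq_lessThan:
  "(\<Sum>i<(m::nat). if P i \<and> p = i then c i else (0::'k::comm_monoid_add)) = (if p < m \<and> P p then c p else 0)"
proof -
  have "(\<Sum>i<m. if P i \<and> p = i then c i else (0::'k)) = (\<Sum>i<m. if p = i then (if P i then c i else 0) else 0)"
    by (rule sum.cong) auto
  also have "\<dots> = (if p < m \<and> P p then c p else 0)" by (subst sum.delta'[OF finite_lessThan]) auto
  finally show ?thesis .
qed

lemma pcf_SP_eq_walk_cf:
  "pcf s t (SP v cs) al (p, j) (p', j') = (walk_cf Suc (length cs) cs (\<lambda>_. 1) al p p' :: 'k::field)"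
proof -
  have "(\<Sum>i<length cs. if cs!i = Dir al \<and> p = i \<and> p' = Suc i then 1 else (0::'k))
     = (if p < length cs \<and> p' = Suc p \<and> cs!p = Dir al then 1 else 0)"
    using sum_if_eq_lessThan[where P = "\<lambda>i. cs!i = Dir al \<and> p' = Suc i" and p = p and c = "\<lambda>_. 1::'k"]
    by (simp add: conj_ac)
  moreover have "(\<Sum>i<length cs. if cs!i = Inv al \<and> p = Suc i \<and> p' = i then 1 else (0::'k))
     = (if p' < length cs \<and> p = Suc p' \<and> cs!p' = Inv al then 1 else 0)"
    using sum_if_eq_lessThan[where P = "\<lambda>i. cs!i = Inv al \<and> p = Suc i" and p = p' and c = "\<lambda>_. 1::'k"]
    by (simp add: conj_ac)
  ultimately show ?thesis by (simp add: sum.distrib walk_cf_def)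
qed

lemma pcf_BP_eq_walk_cf:
  "pcf s t (BP cs mu 1) al (p, 0) (p', 0) =
   (walk_cf (\<lambda>i. Suc i mod length cs) (length cs) cs (weight_at 0 mu) al p p' :: 'k::field)"
proof -
  let ?m = "length cs" and ?w = "weight_at 0 mu"
  have M: "(if i = 0 then jordan_block 1 mu else 1\<^sub>m 1) $$ (0, 0) = ?w i" for i
    by (simp add: jordan_block_def weight_at_def)
  have "(\<Sum>i<?m. if cs!i = Dir al \<and> p = i \<and> p' = Suc i mod ?m then ?w i else 0)
     = (if p < ?m \<and> p' = Suc p mod ?m \<and> cs!p = Dir al then ?w p else 0)"
    using sum_if_eq_lessThan[where P = "\<lambda>i. cs!i = Dir al \<and> p' = Suc i mod ?m" and p = p and c = ?w]
    by (simp add: conj_ac)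
  moreover have "(\<Sum>i<?m. if cs!i = Inv al \<and> p = Suc i mod ?m \<and> p' = i then ?w i else 0)
     = (if p' < ?m \<and> p = Suc p' mod ?m \<and> cs!p' = Inv al then ?w p' else 0)"
    using sum_if_eq_lessThan[where P = "\<lambda>i. cs!i = Inv al \<and> p = Suc i mod ?m" and p = p' and c = ?w]
    by (simp add: conj_ac)
  ultimately show ?thesis by (simp only: pcf.simps Let_def M sum.distrib walk_cf_def)
qed

lemma walk_degeneration:
  fixes Fam :: "('a \<Rightarrow> 'k::field mat) set"
  assumes inf: "infinite (UNIV :: 'k set)"
    and st: "\<forall>(al, be) \<in> R. t al = s be"
    and rel: "\<And>al be w p p' p''. (al, be) \<in> R \<Longrightarrow>
        walk_cf nx m cs w be p' p'' * walk_cf nx m cs w al p p' = (0::'k)"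
    and cut: "indexes_pieces s t L P vtx (walk_cf nx m cs (weight_at c 0)) psi"
    and join: "\<And>lam g h x \<Phi>. lam \<noteq> 0 \<Longrightarrow> is_GL d g h \<Longrightarrow> vertex_enum d P vtx \<Phi> \<Longrightarrow>
        has_coeffs s t d P vtx \<Phi> x (walk_cf nx m cs (weight_at c lam)) \<Longrightarrow> gl_act s t g h x \<in> Fam"
  shows "module_orbit s t d L \<subseteq> zariski_closure s t R d Fam"
proof
  fix y assume "y \<in> module_orbit s t d L"
  then obtain g h x0 where gl: "is_GL d g h" and x0: "realizes s t d L x0" and y: "y = gl_act s t g h x0"
    unfolding module_orbit_def by blast
  obtain \<Phi> where en: "vertex_enum d P vtx \<Phi>"
    and x0c: "has_coeffs s t d P vtx \<Phi> x0 (walk_cf nx m cs (weight_at c 0))"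
    using realizes_has_coeffs[OF cut x0] .
  have "y \<in> modvar s t R d"
    unfolding y using gl_act_in_modvar[OF gl has_coeffs_in_modvar[OF en x0c st rel] st] .
  moreover have "f y = 0" if f: "f \<in> polyfun s t d" and van: "\<forall>z \<in> Fam. f z = 0" for f
    unfolding y
  proof (rule polyfun_vanishes_at_degeneration[OF inf en x0c gl f,
        where cf' = "walk_cf nx m cs (\<lambda>i. if i = c then 1 else 0)"])
    fix lam :: 'k and x assume "lam \<noteq> 0"
      and "has_coeffs s t d P vtx \<Phi> x (\<lambda>al p p'. walk_cf nx m cs (weight_at c 0) al p p'
              + lam * walk_cf nx m cs (\<lambda>i. if i = c then 1 else 0) al p p')"
    then show "f (gl_act s t g h x) = 0"
      using join[OF _ gl en] van unfolding walk_cf_weight_at_affine by blast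
  qed
  ultimately show "y \<in> zariski_closure s t R d Fam" unfolding zariski_closure_def by blast
qed

section \<open>Strings\<close>

lemma mbasis_SP: "mbasis [SP v cs] = {(0, p, 0) | p. p \<le> length cs}"
  unfolding mbasis_def by auto

lemma mbasis_SP_SP:
  "mbasis [SP v cs, SP w cs'] = {(0, p, 0) | p. p \<le> length cs} \<union> {(1, p, 0) | p. p \<le> length cs'}"
proof (rule Set.set_eqI)
  fix y :: "nat \<times> nat \<times> nat"
  show "y \<in> mbasis [SP v cs, SP w cs'] \<longleftrightarrow>
      y \<in> {(0, p, 0) | p. p \<le> length cs} \<union> {(1, p, 0) | p. p \<le> length cs'}"
    by (cases y) (auto simp: mbasis_def less_Suc_eq)
qed

lemma string_indexes_pieces:
  "indexes_pieces s t [SP v cs] {..length cs} (pos_vert s t v cs) (walk_cf Suc (length cs) cs (\<lambda>_. 1 :: 'k::field))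
     (\<lambda>p. (0, p, 0))"
  unfolding indexes_pieces_def
proof (intro conjI)
  show "bij_betw (\<lambda>p. (0, p, 0)) {..length cs} (mbasis [SP v cs])"
    unfolding mbasis_SP by (rule bij_betw_byWitness[where f' = "\<lambda>(i, p, j). p"]) auto
qed (auto simp: mvert_def mcf_def pcf_SP_eq_walk_cf simp del: pcf.simps)

text \<open>Deleting the k-th letter of a string splits the positions 0, ..., m into those of
C_{\<le>k} (the first k) and those of C_{\<ge>k+1}.\<close>

definition split_pos :: "nat \<Rightarrow> nat \<Rightarrow> nat \<times> nat \<times> nat" where
  "split_pos k p = (if p < k then (0, p, 0) else (1, p - k, 0))"

lemma mcf_split_pos:
  fixes v w :: 'v
  assumes k: "1 \<le> k" "k \<le> length cs" and pp: "p \<le> length cs" "p' \<le> length cs"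
  shows "mcf s t [SP v (take (k - 1) cs), SP w (drop k cs)] al (split_pos k p) (split_pos k p')
           = walk_cf Suc (length cs) cs (weight_at (k - 1) (0 :: 'k::field)) al p p'"
proof -
  let ?L = "[SP v (take (k - 1) cs), SP w (drop k cs)] :: ('v, 'a, 'k) piece list"
  let ?w = "weight_at (k - 1) (0 :: 'k)"
  consider "p < k" "p' < k" | "p < k" "\<not> p' < k" | "\<not> p < k" "p' < k" | "\<not> p < k" "\<not> p' < k"
    by blast
  then show ?thesis
  proof cases
    case 1
    then have "mcf s t ?L al (split_pos k p) (split_pos k p')
        = walk_cf Suc (k - 1) (take (k - 1) cs) (\<lambda>_. 1) al p p'"
      using k by (simp add: split_pos_def mcf_def pcf_SP_eq_walk_cf del: pcf.simps)
    also have "\<dots> = walk_cf Suc (length cs) cs ?w al p p'"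
      unfolding walk_cf_def using 1 k by (intro arg_cong2[where f = "(+)"]) (auto simp: weight_at_def nth_take)
    finally show ?thesis .
  next
    case 2
    then show ?thesis using k by (auto simp: split_pos_def mcf_def walk_cf_def weight_at_def)
  next
    case 3
    then show ?thesis using k by (auto simp: split_pos_def mcf_def walk_cf_def weight_at_def)
  next
    case 4
    then have "mcf s t ?L al (split_pos k p) (split_pos k p')
        = walk_cf Suc (length cs - k) (drop k cs) (\<lambda>_. 1) al (p - k) (p' - k)"
      using k by (simp add: split_pos_def mcf_def pcf_SP_eq_walk_cf del: pcf.simps)
    also have "\<dots> = walk_cf Suc (length cs) cs ?w al p p'"
      unfolding walk_cf_def using 4 k pp by (intro arg_cong2[where f = "(+)"]) (auto simp: weight_at_def nth_drop)
    finally show ?thesis .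
  qed
qed

lemma string_cut_indexes_pieces:
  fixes s t :: "'a \<Rightarrow> 'v"
  assumes k: "1 \<le> k" "k \<le> length cs"
  shows "indexes_pieces s t [SP v (take (k - 1) cs), SP (ltgt s t (cs!(k - 1))) (drop k cs)] {..length cs}
     (pos_vert s t v cs) (walk_cf Suc (length cs) cs (weight_at (k - 1) (0 :: 'k::field))) (split_pos k)"
  unfolding indexes_pieces_def
proof (intro conjI ballI allI impI)
  let ?L = "[SP v (take (k - 1) cs), SP (ltgt s t (cs!(k - 1))) (drop k cs)] :: ('v, 'a, 'k) piece list"
  show "bij_betw (split_pos k) {..length cs} (mbasis ?L)"
    unfolding mbasis_SP_SP
    by (rule bij_betw_byWitness[where f' = "\<lambda>(i, q, j). if i = 0 then q else q + k"])
       (use k in \<open>auto simp: split_pos_def\<close>)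
  show "mvert s t ?L (split_pos k p) = pos_vert s t v cs p" if "p \<in> {..length cs}" for p
    using k that by (auto simp: split_pos_def mvert_def pos_vert_def Suc_diff_Suc add.commute)
  show "mcf s t ?L al (split_pos k p) (split_pos k p') = walk_cf Suc (length cs) cs (weight_at (k - 1) 0) al p p'"
    if "p \<in> {..length cs}" "p' \<in> {..length cs}" for al p p'
    using mcf_split_pos[OF k] that by simp
qed

lemma string_walk_relation:
  assumes "is_string s t R (v, cs)" "(al, be) \<in> R"
  shows "walk_cf Suc (length cs) cs w be p' p'' * walk_cf Suc (length cs) cs w al p p' = 0"
proof (rule walk_cf_relation)
  have "\<forall>i al be. Suc i < length cs \<longrightarrow>
      (cs!i = Dir al \<and> cs!Suc i = Dir be \<or> cs!i = Inv be \<and> cs!Suc i = Inv al) \<longrightarrow> (al, be) \<notin> R"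
    using assms(1) unfolding is_string_def by simp
  then show "\<not> (cs!i = Dir al \<and> cs!Suc i = Dir be) \<and> \<not> (cs!i = Inv be \<and> cs!Suc i = Inv al)"
    if "Suc i < length cs" for i
    using that assms(2) by blast
qed simp

text \<open>Multiplying the basis vectors at the positions after the deleted letter by lam (or by
lam\<inverse>, according to the orientation of the letter) turns its weight lam into 1.\<close>

lemma string_rescale_weight_to_one:
  fixes lam :: "'k::field"
  assumes lam: "lam \<noteq> 0" and k: "1 \<le> k"
  obtains e where "\<forall>p. e p \<noteq> 0"
    and "(\<lambda>al p p'. walk_cf Suc m cs (weight_at (k - 1) lam) al p p' * e p / e p') = walk_cf Suc m cs (\<lambda>_. 1)"
proof
  define \<rho> where "\<rho> = (if direct (cs!(k - 1)) then lam else 1 / lam)"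
  define e where "e p = (if k \<le> p then \<rho> else 1)" for p
  show e0: "\<forall>p. e p \<noteq> 0" using lam unfolding e_def \<rho>_def by auto
  have "weight_at (k - 1) lam i * (if direct (cs!i) then e i / e (Suc i) else e (Suc i) / e i) = 1" for i
  proof (cases "i = k - 1")
    case True
    then have "e i = 1" "e (Suc i) = \<rho>" using k unfolding e_def by auto
    with True lam show ?thesis by (simp add: weight_at_def \<rho>_def)
  next
    case False
    then have "e i = e (Suc i)" using k unfolding e_def by auto
    with False e0 show ?thesis by (simp add: weight_at_def)
  qed
  then show "(\<lambda>al p p'. walk_cf Suc m cs (weight_at (k - 1) lam) al p p' * e p / e p') = walk_cf Suc m cs (\<lambda>_. 1)"
    unfolding walk_cf_rescale by (intro walk_cf_cong) simp
qed

lemma string_degeneration: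
  fixes s t :: "'a \<Rightarrow> 'v"
  assumes inf: "infinite (UNIV :: 'k::field set)" and st: "\<forall>(al, be) \<in> R. t al = s be"
    and str: "is_string s t R (v, cs)" and k: "1 \<le> k" "k \<le> length cs"
  shows "module_orbit s t d [SP v (take (k - 1) cs), SP (ltgt s t (cs!(k - 1))) (drop k cs)]
           \<subseteq> zariski_closure s t R d (module_orbit s t d [SP v cs] :: ('a \<Rightarrow> 'k mat) set)"
proof (rule walk_degeneration[OF inf st string_walk_relation[OF str] string_cut_indexes_pieces[OF k]])
  fix lam :: 'k and g h :: "'v \<Rightarrow> 'k mat" and x \<Phi>
  assume lam: "lam \<noteq> 0" and gl: "is_GL d g h" and en: "vertex_enum d {..length cs} (pos_vert s t v cs) \<Phi>"
    and x: "has_coeffs s t d {..length cs} (pos_vert s t v cs) \<Phi> x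
              (walk_cf Suc (length cs) cs (weight_at (k - 1) lam))"
  obtain e where e: "\<forall>p. e p \<noteq> 0"
    and rescaled: "(\<lambda>al p p'. walk_cf Suc (length cs) cs (weight_at (k - 1) lam) al p p' * e p / e p')
                     = walk_cf Suc (length cs) cs (\<lambda>_. 1)"
    using string_rescale_weight_to_one[OF lam k(1)] .
  show "gl_act s t g h x \<in> module_orbit s t d [SP v cs]"
  proof (rule rescaled_in_module_orbit[OF en x _ gl])
    show "\<forall>p \<in> {..length cs}. e p \<noteq> 0" using e by simp
    fix x' assume "has_coeffs s t d {..length cs} (pos_vert s t v cs) \<Phi> x'
        (\<lambda>al p p'. walk_cf Suc (length cs) cs (weight_at (k - 1) lam) al p p' * e p / e p')"
    then show "realizes s t d [SP v cs] x'"
      unfolding rescaled by (rule has_coeffs_realizes[OF string_indexes_pieces en])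
  qed
qed

section \<open>Bands\<close>

lemma Suc_mod_eq_if: "i < m \<Longrightarrow> Suc i mod m = (if Suc i = m then 0 else Suc i)"
  by (cases "Suc i = m") auto

lemma band_square_is_string:
  assumes "is_band s t R cs"
  shows "is_string s t R (lsrc s t (hd cs), cs @ cs)"
proof -
  have "concat (replicate 2 cs) = cs @ cs" by (simp add: numeral_2_eq_2)
  with assms show ?thesis unfolding is_band_def by (metis one_le_numeral)
qed

lemma nth_append_self_Suc:
  "i < length cs \<Longrightarrow> (cs @ cs) ! Suc i = cs ! (Suc i mod length cs)"
  by (auto simp: nth_append Suc_mod_eq_if)

lemma band_connected:
  assumes "is_band s t R cs" "i < length cs"
  shows "ltgt s t (cs!i) = lsrc s t (cs!(Suc i mod length cs))"
proof -
  have "\<forall>i. Suc i < length (cs @ cs) \<longrightarrow> ltgt s t ((cs @ cs)!i) = lsrc s t ((cs @ cs)!Suc i)"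
    using band_square_is_string[OF assms(1)] unfolding is_string_def prod.case by blast
  moreover have "Suc i < length (cs @ cs)" using assms(2) by simp
  ultimately have "ltgt s t ((cs @ cs)!i) = lsrc s t ((cs @ cs)!Suc i)" by blast
  then show ?thesis by (simp only: nth_append_left[OF assms(2)] nth_append_self_Suc[OF assms(2)])
qed

lemma band_walk_relation:
  assumes band: "is_band s t R cs" and rel: "(al, be) \<in> R"
  shows "walk_cf (\<lambda>i. Suc i mod length cs) (length cs) cs w be p' p'' *
         walk_cf (\<lambda>i. Suc i mod length cs) (length cs) cs w al p p' = 0"
proof (rule walk_cf_relation)
  show "inj_on (\<lambda>i. Suc i mod length cs) {..<length cs}"
    by (auto simp: inj_on_def Suc_mod_eq_if split: if_splits)
  have no_rel: "\<forall>i al be. Suc i < length (cs @ cs) \<longrightarrow>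
      ((cs @ cs)!i = Dir al \<and> (cs @ cs)!Suc i = Dir be \<or> (cs @ cs)!i = Inv be \<and> (cs @ cs)!Suc i = Inv al)
      \<longrightarrow> (al, be) \<notin> R"
    using band_square_is_string[OF band] unfolding is_string_def prod.case by blast
  fix i assume i: "i < length cs"
  have "Suc i < length (cs @ cs)" using i by simp
  with no_rel rel have "\<not> ((cs @ cs)!i = Dir al \<and> (cs @ cs)!Suc i = Dir be) \<and>
      \<not> ((cs @ cs)!i = Inv be \<and> (cs @ cs)!Suc i = Inv al)" by blast
  then show "\<not> (cs!i = Dir al \<and> cs!(Suc i mod length cs) = Dir be) \<and>
             \<not> (cs!i = Inv be \<and> cs!(Suc i mod length cs) = Inv al)"
    by (simp add: nth_append_left[OF i] nth_append_self_Suc[OF i])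
qed

text \<open>Reading a band from the position after the deleted letter c renumbers the positions by
\<rho>, sending c to the last position m - 1 of the resulting string.\<close>

lemma walk_cf_reindex_cut:
  assumes range: "\<And>p. p < m \<Longrightarrow> \<rho> p < m"
    and inj: "\<And>p q. p < m \<Longrightarrow> q < m \<Longrightarrow> \<rho> p = \<rho> q \<Longrightarrow> p = q"
    and last: "\<rho> c = m - 1" and c: "c < m"
    and next_range: "\<And>p. p < m \<Longrightarrow> nx p < m"
    and step: "\<And>p. p < m \<Longrightarrow> p \<noteq> c \<Longrightarrow> \<rho> (nx p) = Suc (\<rho> p)"
    and letters: "\<And>p. p < m \<Longrightarrow> p \<noteq> c \<Longrightarrow> hs ! (\<rho> p) = cs ! p"
    and pp: "p < m" "p' < m"
  shows "walk_cf Suc (m - 1) hs (\<lambda>_. 1) al (\<rho> p) (\<rho> p') = (walk_cf nx m cs (weight_at c 0) al p p' :: 'k::field)"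
proof -
  have lt: "\<rho> q < m - 1 \<longleftrightarrow> q \<noteq> c" if "q < m" for q
  proof (cases "q = c")
    case False
    then have "\<rho> q \<noteq> m - 1" using inj[OF that c] last by metis
    with range[OF that] False show ?thesis by auto
  qed (use last in simp)
  have succ: "\<rho> q' = Suc (\<rho> q) \<longleftrightarrow> q' = nx q" if "q < m" "q' < m" "q \<noteq> c" for q q'
    using step[OF that(1,3)] inj[OF that(2) next_range[OF that(1)]] by auto
  have D: "(if \<rho> p < m - 1 \<and> \<rho> p' = Suc (\<rho> p) \<and> hs ! \<rho> p = Dir al then 1 else 0) =
    (if p < m \<and> p' = nx p \<and> cs ! p = Dir al then weight_at c 0 p else (0::'k))"
    using lt[OF pp(1)] succ[OF pp] letters[OF pp(1)] pp(1) by (cases "p = c") (auto simp: weight_at_def)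
  have I: "(if \<rho> p' < m - 1 \<and> \<rho> p = Suc (\<rho> p') \<and> hs ! \<rho> p' = Inv al then 1 else 0) =
    (if p' < m \<and> p = nx p' \<and> cs ! p' = Inv al then weight_at c 0 p' else (0::'k))"
    using lt[OF pp(2)] succ[OF pp(2,1)] letters[OF pp(2)] pp(2) by (cases "p' = c") (auto simp: weight_at_def)
  show ?thesis unfolding walk_cf_def D I ..
qed

definition band_cut_pos :: "nat \<Rightarrow> nat \<Rightarrow> nat \<Rightarrow> nat" where
  "band_cut_pos k m p = (if k \<le> p then p - k else p + m - k)"

lemma band_cut_pos_facts:
  assumes k: "1 \<le> k" "k \<le> length cs"
  defines "m \<equiv> length cs" and "hs \<equiv> drop k cs @ take (k - 1) cs"
  shows "\<And>p. p < m \<Longrightarrow> band_cut_pos k m p < m"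
    and "\<And>p q. p < m \<Longrightarrow> q < m \<Longrightarrow> band_cut_pos k m p = band_cut_pos k m q \<Longrightarrow> p = q"
    and "band_cut_pos k m (k - 1) = m - 1" and "k - 1 < m"
    and "\<And>p. p < m \<Longrightarrow> Suc p mod m < m"
    and "\<And>p. p < m \<Longrightarrow> p \<noteq> k - 1 \<Longrightarrow> band_cut_pos k m (Suc p mod m) = Suc (band_cut_pos k m p)"
    and "\<And>p. p < m \<Longrightarrow> p \<noteq> k - 1 \<Longrightarrow> hs ! (band_cut_pos k m p) = cs ! p"
    and "length hs = m - 1"
  using k unfolding band_cut_pos_def m_def hs_def
  by (auto simp: nth_append Suc_mod_eq_if split: if_splits)

lemma band_cut_pos_vertex:
  assumes k: "1 \<le> k" "k \<le> length cs" and band: "is_band s t R cs" and p: "p < length cs"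
  shows "pos_vert s t (ltgt s t (cs!(k - 1))) (drop k cs @ take (k - 1) cs) (band_cut_pos k (length cs) p)
           = lsrc s t (cs!p)"
proof -
  define m where "m = length cs"
  define hs where "hs = drop k cs @ take (k - 1) cs"
  note facts = band_cut_pos_facts[OF k, folded m_def hs_def]
  show ?thesis
  proof (cases "p = Suc (k - 1) mod m")
    case True
    then have "band_cut_pos k m p = 0"
      using k unfolding m_def band_cut_pos_def by (cases "k = length cs") (auto simp: Suc_mod_eq_if)
    then show ?thesis using True band_connected[OF band facts(4)[unfolded m_def]]
      by (simp add: pos_vert_def m_def)
  next
    case False
    define q where "q = (if p = 0 then m - 1 else p - 1)"
    have q: "q < m" "Suc q mod m = p" using p unfolding q_def m_def by (auto simp: Suc_mod_eq_if)
    have "q \<noteq> k - 1" using False q by auto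
    then have "band_cut_pos k m p = Suc (band_cut_pos k m q)" "hs ! band_cut_pos k m q = cs ! q"
      using facts(6,7)[OF q(1)] q(2) by auto
    then show ?thesis using band_connected[OF band q(1)[unfolded m_def]] q(2)
      by (simp add: pos_vert_def m_def hs_def)
  qed
qed

lemma band_cut_indexes_pieces:
  fixes s t :: "'a \<Rightarrow> 'v"
  assumes k: "1 \<le> k" "k \<le> length cs" and band: "is_band s t R cs"
  shows "indexes_pieces s t [SP (ltgt s t (cs!(k - 1))) (drop k cs @ take (k - 1) cs)] {..<length cs}
     (\<lambda>p. lsrc s t (cs!p)) (walk_cf (\<lambda>i. Suc i mod length cs) (length cs) cs (weight_at (k - 1) (0 :: 'k::field)))
     (\<lambda>p. (0, band_cut_pos k (length cs) p, 0))"
  unfolding indexes_pieces_def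
proof (intro conjI ballI allI impI)
  define m where "m = length cs"
  define hs where "hs = drop k cs @ take (k - 1) cs"
  let ?L = "[SP (ltgt s t (cs!(k - 1))) hs] :: ('v, 'a, 'k) piece list"
  note facts = band_cut_pos_facts[OF k, folded m_def hs_def]
  show "bij_betw (\<lambda>p. (0, band_cut_pos k (length cs) p, 0)) {..<length cs} (mbasis ?L)"
    unfolding mbasis_SP hs_def
    by (rule bij_betw_byWitness[where f' = "\<lambda>(i, q, j). if q < length cs - k then q + k else q + k - length cs"])
       (use k in \<open>auto simp: band_cut_pos_def\<close>)
  show "mvert s t ?L (0, band_cut_pos k (length cs) p, 0) = lsrc s t (cs!p)" if "p \<in> {..<length cs}" for p
    using band_cut_pos_vertex[OF k band] that unfolding hs_def by (simp add: mvert_def)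
  fix al p p' assume pp: "p \<in> {..<length cs}" "p' \<in> {..<length cs}"
  have "mcf s t ?L al (0, band_cut_pos k m p, 0) (0, band_cut_pos k m p', 0)
      = walk_cf Suc (m - 1) hs (\<lambda>_. 1) al (band_cut_pos k m p) (band_cut_pos k m p')"
    by (simp add: mcf_def pcf_SP_eq_walk_cf facts(8) del: pcf.simps)
  also have "\<dots> = walk_cf (\<lambda>i. Suc i mod m) m cs (weight_at (k - 1) 0) al p p'"
    by (rule walk_cf_reindex_cut[OF facts(1-7)]) (use pp in \<open>auto simp: m_def\<close>)
  finally show "mcf s t ?L al (0, band_cut_pos k (length cs) p, 0) (0, band_cut_pos k (length cs) p', 0)
      = walk_cf (\<lambda>i. Suc i mod length cs) (length cs) cs (weight_at (k - 1) 0) al p p'"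
    unfolding m_def hs_def .
qed

lemma band_indexes_pieces:
  "indexes_pieces s t [BP cs mu 1] {..<length cs} (\<lambda>p. lsrc s t (cs!p))
     (walk_cf (\<lambda>i. Suc i mod length cs) (length cs) cs (weight_at 0 (mu :: 'k::field))) (\<lambda>p. (0, p, 0))"
  unfolding indexes_pieces_def
proof (intro conjI)
  have mb: "mbasis [BP cs mu 1] = {(0, p, 0) | p. p < length cs}" unfolding mbasis_def by auto
  show "bij_betw (\<lambda>p. (0, p, 0)) {..<length cs} (mbasis [BP cs mu 1])"
    unfolding mb by (rule bij_betw_byWitness[where f' = "\<lambda>(i, p, j). p"]) auto
qed (auto simp: mvert_def mcf_def pcf_BP_eq_walk_cf pcf_BP_eq_walk_cf[unfolded One_nat_def] simp del: pcf.simps)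

lemma band_module_orbit_subset_family:
  assumes "mu \<noteq> 0"
  shows "module_orbit s t d [BP cs mu 1] \<subseteq> sb_family s t d (Band cs)"
proof
  fix y assume "y \<in> module_orbit s t d [BP cs mu 1]"
  then show "y \<in> sb_family s t d (Band cs)"
    unfolding sb_family.simps family_def using assms by (intro CollectI exI[of _ "[[(mu, 1)]]"]) auto
qed

text \<open>Multiplying the basis vectors at the positions 1, ..., k - 1 by lam or lam\<inverse>, according
to the orientation of the deleted letter, moves its weight lam onto the first letter of the band,
where it becomes the nonzero eigenvalue mu of a band module M(B, mu, 1).\<close>

lemma band_rescale_weight_to_first_letter:
  fixes lam :: "'k::field"
  assumes lam: "lam \<noteq> 0" and k: "1 \<le> k" "k \<le> m"
  obtains e mu where "\<forall>p. e p \<noteq> 0" and "mu \<noteq> 0"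
    and "(\<lambda>al p p'. walk_cf (\<lambda>i. Suc i mod m) m cs (weight_at (k - 1) lam) al p p' * e p / e p')
           = walk_cf (\<lambda>i. Suc i mod m) m cs (weight_at 0 mu)"
proof -
  define nx where "nx = (\<lambda>i. Suc i mod m)"
  define \<rho> where "\<rho> = (if direct (cs!(k - 1)) then 1 / lam else lam)"
  define e where "e p = (if 1 \<le> p \<and> p \<le> k - 1 then \<rho> else 1)" for p
  have e0: "e p \<noteq> 0" for p using lam unfolding e_def \<rho>_def by auto
  define w where "w i = weight_at (k - 1) lam i * (if direct (cs!i) then e i / e (nx i) else e (nx i) / e i)" for i
  have w1: "w i = 1" if "0 < i" "i < m" for i
  proof -
    have nx: "nx i = (if Suc i = m then 0 else Suc i)" unfolding nx_def using Suc_mod_eq_if that(2) by simp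
    show ?thesis
    proof (cases "i = k - 1")
      case True
      then have "e i = \<rho>" "e (nx i) = 1" using that k unfolding e_def nx by auto
      with True lam show ?thesis unfolding w_def by (simp add: weight_at_def \<rho>_def)
    next
      case False
      then have "e i = e (nx i)" using that k unfolding e_def nx by auto
      with False e0 show ?thesis unfolding w_def by (simp add: weight_at_def)
    qed
  qed
  have "w 0 \<noteq> 0" using lam e0 unfolding w_def weight_at_def by auto
  moreover have "(\<lambda>al p p'. walk_cf nx m cs (weight_at (k - 1) lam) al p p' * e p / e p')
      = walk_cf nx m cs (weight_at 0 (w 0))"
    unfolding walk_cf_rescale w_def[symmetric] by (intro walk_cf_cong) (auto simp: weight_at_def w1)
  ultimately show ?thesis using that e0 unfolding nx_def by blast
qed

lemma band_degeneration:
  fixes s t :: "'a \<Rightarrow> 'v"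
  assumes inf: "infinite (UNIV :: 'k::field set)" and st: "\<forall>(al, be) \<in> R. t al = s be"
    and band: "is_band s t R cs" and k: "1 \<le> k" "k \<le> length cs"
  shows "module_orbit s t d [SP (ltgt s t (cs!(k - 1))) (drop k cs @ take (k - 1) cs)]
           \<subseteq> zariski_closure s t R d (sb_family s t d (Band cs) :: ('a \<Rightarrow> 'k mat) set)"
proof (rule walk_degeneration[OF inf st band_walk_relation[OF band] band_cut_indexes_pieces[OF k band]])
  fix lam :: 'k and g h :: "'v \<Rightarrow> 'k mat" and x \<Phi>
  assume lam: "lam \<noteq> 0" and gl: "is_GL d g h" and en: "vertex_enum d {..<length cs} (\<lambda>p. lsrc s t (cs!p)) \<Phi>"
    and x: "has_coeffs s t d {..<length cs} (\<lambda>p. lsrc s t (cs!p)) \<Phi> x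
              (walk_cf (\<lambda>i. Suc i mod length cs) (length cs) cs (weight_at (k - 1) lam))"
  obtain e mu where e: "\<forall>p. e p \<noteq> 0" and mu: "mu \<noteq> 0"
    and rescaled: "(\<lambda>al p p'. walk_cf (\<lambda>i. Suc i mod length cs) (length cs) cs (weight_at (k - 1) lam) al p p'
                      * e p / e p') = walk_cf (\<lambda>i. Suc i mod length cs) (length cs) cs (weight_at 0 mu)"
    using band_rescale_weight_to_first_letter[OF lam k] .
  have "gl_act s t g h x \<in> module_orbit s t d [BP cs mu 1]"
  proof (rule rescaled_in_module_orbit[OF en x _ gl])
    show "\<forall>p \<in> {..<length cs}. e p \<noteq> 0" using e by simp
    fix x' assume "has_coeffs s t d {..<length cs} (\<lambda>p. lsrc s t (cs!p)) \<Phi> x'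
        (\<lambda>al p p'. walk_cf (\<lambda>i. Suc i mod length cs) (length cs) cs (weight_at (k - 1) lam) al p p' * e p / e p')"
    then show "realizes s t d [BP cs mu 1] x'"
      unfolding rescaled by (rule has_coeffs_realizes[OF band_indexes_pieces en])
  qed
  then show "gl_act s t g h x \<in> sb_family s t d (Band cs)" using band_module_orbit_subset_family[OF mu] by blast
qed

lemma family_without_bands: "family s t d strs [] = module_orbit s t d (map (\<lambda>(v, cs). SP v cs) strs)"
  unfolding family_def by auto

theorem mainTheorem5:
  fixes s t :: "'a::finite \<Rightarrow> 'v::finite"
    and R :: "('a \<times> 'a) set"
    and D :: "('v, 'a) strband"
    and k :: nat
  assumes "alg_closed TYPE('k::field)"
    and "gentle s t R"
    and "fin_dim_alg s t R"
    and "is_strband s t R D"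
    and "1 \<le> k" and "k \<le> sb_len D"
  shows "(family s t (sb_dimvec s t D) (sb_hat s t D k) [] :: ('a \<Rightarrow> 'k mat) set)
           \<subseteq> zariski_closure s t R (sb_dimvec s t D) (sb_family s t (sb_dimvec s t D) D)"
proof -
  have inf: "infinite (UNIV :: 'k set)" by (rule alg_closed_infinite[OF assms(1)])
  have st: "\<forall>(al, be) \<in> R. t al = s be" using assms(2) unfolding gentle_def by blast
  show ?thesis
  proof (cases D)
    case (Str v cs)
    then show ?thesis
      using string_degeneration[OF inf st, of v cs k] assms(4-6) by (simp add: family_without_bands)
  next
    case (Band cs)
    then show ?thesis
      using band_degeneration[OF inf st, of cs k] assms(4-6) by (simp add: family_without_bands)
  qed
qed

end
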